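(* For every integer $n\geq 2$, $$\sum_{k=1}^{n-1}\frac{B_{2k}\bar B_{2n-2k}}{(2k)(2n-2k)}=\frac1n\sum_{k=1}^{n}\frac{B_{2k}B_{2n-2k}}{2k}\binom{2n}{2k}\,\frac{1-2^{2k-1}}{2^{2n-1}}+\frac1n\,\frac{B_{2n}}{2^{2n}}H_{2n-1}.$$
   Context: $B_n$ denotes the Bernoulli numbers, defined by $\frac{x}{e^x-1}=\sum_{n\ge 0}B_n\frac{x^n}{n!}$ (so $B_0=1$). $\bar B_n:=\frac{1-2^{n-1}}{2^{n-1}}B_n$. $H_i=\sum_{j=1}^i \frac1j$ is the $i$-th harmonic number. *)

theory Defs
  imports Complex_Main
begin

text \<open>Bernoulli numbers with the convention x/(e^x-1) = sum B_n x^n/n!, so B_0 = 1, B_1 = -1/2.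
  Defined by the standard recurrence sum_{k=0}^{n} (n+1 choose k) B_k = 0 for n >= 1.\<close>
fun bernoulli :: "nat \<Rightarrow> real" where
  "bernoulli n = (if n = 0 then 1 else
     - (\<Sum>k<n. real ((n + 1) choose k) * (if k < n then bernoulli k else 0)) / real (n + 1))"

declare bernoulli.simps[simp del]

definition bernoulli_bar :: "nat \<Rightarrow> real" where
  "bernoulli_bar n = (1 - 2 ^ n / 2) / (2 ^ n / 2) * bernoulli n"

definition harm :: "nat \<Rightarrow> real" where
  "harm i = (\<Sum>j=1..i. 1 / real j)"

end

(* Write B_k(x) for the Bernoulli polynomials and, for c ~= 0,
     S(x) = sum_{k=1}^{N-1} B_k(x) B_{N-k}(x + c) / (k (N - k)),
     Phi_c(x) = (H_{N-1} B_N(x) + sum_{i=1}^{N-1} binom(N, i) / i * B_i(c) B_{N-i}(x)) / N.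
   By B_k(x + 1) - B_k(x) = k x^(k-1), the forward differences of S(x) and of
   Phi_c(x) + Phi_{-c}(x + c) + (B_N(x + c) - B_N(x)) / (N c) agree, so the two differ by a
   periodic polynomial, that is, by a constant. Integrating over [0, 1], where
   int_0^1 B_k(x) B_m(x + c) dx follows from repeated integration by parts, identifies the
   constant as (B_N(c) + B_N(-c)) / N^2. The theorem is the case N = 2n, c = 1/2, x = 0:
   there B_k(1/2) is the barred Bernoulli number, and all terms of odd index vanish. *)

theory Submission
  imports
    Defs
    "HOL-Analysis.Henstock_Kurzweil_Integration"
    "HOL-Analysis.Weierstrass_Theorems"
    "HOL-Analysis.Poly_Roots"
begin

lemma has_real_derivative_eq_imp_eq:
  fixes f g :: "real \<Rightarrow> real"
  assumes "\<And>x. (f has_real_derivative h x) (at x)" "\<And>x. (g has_real_derivative h x) (at x)"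
    and "f a = g a"
  shows "f x = g x"
proof -
  have "(\<lambda>x. f x - g x) x = (\<lambda>x. f x - g x) a"
    by (rule DERIV_isconst_all) (use assms(1,2) DERIV_diff in fastforce)
  with assms(3) show ?thesis by simp
qed

lemma has_integral_real_derivative:
  fixes F f :: "real \<Rightarrow> real"
  assumes "a \<le> b" "\<And>x. (F has_real_derivative f x) (at x)"
  shows "(f has_integral F b - F a) {a..b}"
  using assms
  by (intro fundamental_theorem_of_calculus)
     (auto simp: has_real_derivative_iff_has_vector_derivative[symmetric]
           intro: has_field_derivative_at_within)

lemma periodic_real_polynomial_function_const:
  fixes f :: "real \<Rightarrow> real"
  assumes f: "real_polynomial_function f" and periodic: "\<And>x. f (x + 1) = f x"
  shows "f x = f y"
proof -
  have "real_polynomial_function (\<lambda>x. f x - f 0)"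
    using f by auto
  then obtain a n where "(\<lambda>x. f x - f 0) = (\<lambda>x. \<Sum>i\<le>n. a i * x ^ i)"
    using real_polynomial_function_iff_sum by blast
  then have a: "f z - f 0 = (\<Sum>i\<le>n. a i * z ^ i)" for z
    by (simp add: fun_eq_iff)
  have "f (real m) = f 0" for m
  proof (induction m)
    case (Suc m)
    then show ?case using periodic[of "real m"] by (simp add: add.commute)
  qed simp
  then have "range real \<subseteq> {z. (\<Sum>i\<le>n. a i * z ^ i) = 0}"
    by (auto simp: a[symmetric])
  then have "infinite {z. (\<Sum>i\<le>n. a i * z ^ i) = 0}"
    using infinite_UNIV_char_0 finite_subset by (metis finite_imageD inj_of_nat)
  then have "f z - f 0 = 0" for z
    using polyfun_finite_roots[of a n] by (auto simp: a)
  then show ?thesis by (metis eq_iff_diff_eq_0)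
qed

lemma sum_triangle_swap:
  "(\<Sum>k=1..n. \<Sum>i=Suc k..n. f k i) = (\<Sum>i=1..n. \<Sum>k=1..i-1. f k i :: 'a :: comm_monoid_add)"
proof (induction n)
  case (Suc n)
  have "(\<Sum>k=1..Suc n. \<Sum>i=Suc k..Suc n. f k i) = (\<Sum>k=1..n. \<Sum>i=Suc k..Suc n. f k i)"
    by simp
  also have "\<dots> = (\<Sum>k=1..n. (\<Sum>i=Suc k..n. f k i) + f k (Suc n))"
    by (intro sum.cong) auto
  also have "\<dots> = (\<Sum>k=1..n. \<Sum>i=Suc k..n. f k i) + (\<Sum>k=1..n. f k (Suc n))"
    by (rule sum.distrib)
  also have "\<dots> = (\<Sum>i=1..n. \<Sum>k=1..i-1. f k i) + (\<Sum>k=1..n. f k (Suc n))"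
    unfolding Suc.IH ..
  finally show ?case
    by simp
qed simp

lemma sum_even_eq_sum:
  fixes f :: "nat \<Rightarrow> 'a :: comm_monoid_add"
  assumes "\<And>k. k < m \<Longrightarrow> f (2 * k + 1) = 0"
  shows "(\<Sum>k=1..m. f (2 * k)) = (\<Sum>i=1..2*m. f i)"
  using assms
proof (induction m)
  case (Suc m)
  have "(\<Sum>k=1..Suc m. f (2 * k)) = (\<Sum>i=1..2*m. f i) + f (2 * m + 2)"
    using Suc by simp
  also have "\<dots> = (\<Sum>i=1..2 * Suc m. f i)"
    using Suc.prems[of m] by simp
  finally show ?case .
qed simp

section \<open>Bernoulli polynomials\<close>

lemma bernoulli_0 [simp]: "bernoulli 0 = 1"
  by (simp add: bernoulli.simps)

lemma bernoulli_recurrence: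
  assumes "n \<ge> 1"
  shows "(\<Sum>k\<le>n. real (Suc n choose k) * bernoulli k) = 0"
proof -
  have "bernoulli n = - (\<Sum>k<n. real (Suc n choose k) * bernoulli k) / real (Suc n)"
    using assms by (subst bernoulli.simps) (auto intro: sum.cong)
  then show ?thesis
    by (simp add: lessThan_Suc_atMost[symmetric] field_simps)
qed

definition appell :: "(nat \<Rightarrow> real) \<Rightarrow> nat \<Rightarrow> real \<Rightarrow> real" where
  "appell a k y = (\<Sum>j\<le>k. real (k choose j) * a j * y ^ (k - j))"

lemma appell_0 [simp]: "appell a 0 y = a 0"
  by (simp add: appell_def)

lemma appell_at_0: "appell a k 0 = a k"
  unfolding appell_def by (subst sum.mono_neutral_right[of "{..k}" "{k}"]) auto

lemma has_real_derivative_appell: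
  "(appell a k has_real_derivative real k * appell a (k - 1) y) (at y)"
proof -
  have "(appell a k has_real_derivative
      (\<Sum>j\<le>k. real (k choose j) * a j * (real (k - j) * y ^ (k - j - 1)))) (at y)"
    unfolding appell_def[abs_def] by (auto intro!: derivative_eq_intros simp: ac_simps)
  also have "(\<Sum>j\<le>k. real (k choose j) * a j * (real (k - j) * y ^ (k - j - 1)))
      = real k * appell a (k - 1) y"
  proof (cases k)
    case (Suc m)
    have "real (k choose j) * a j * (real (k - j) * y ^ (k - j - 1))
        = real k * (real (m choose j) * a j * y ^ (m - j))" if "j \<le> m" for j
    proof -
      have "real (k - j) * real (k choose j) = real k * real (m choose j)"
        using binomial_absorb_comp[of k j] Suc by (metis diff_Suc_1 of_nat_mult)
      moreover have "k - j - 1 = m - j"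
        using Suc by simp
      ultimately show ?thesis
        by (metis (no_types, lifting) mult.assoc mult.left_commute)
    qed
    then have "(\<Sum>j\<le>m. real (k choose j) * a j * (real (k - j) * y ^ (k - j - 1)))
        = (\<Sum>j\<le>m. real k * (real (m choose j) * a j * y ^ (m - j)))"
      by (intro sum.cong) auto
    then show ?thesis
      using Suc by (simp add: appell_def sum_distrib_left)
  qed simp
  finally show ?thesis .
qed

definition bernpoly :: "nat \<Rightarrow> real \<Rightarrow> real" where
  "bernpoly k = appell bernoulli k"

lemma bernpoly_0 [simp]: "bernpoly 0 x = 1"
  by (simp add: bernpoly_def)

lemma bernpoly_at_0 [simp]: "bernpoly k 0 = bernoulli k"
  by (simp add: bernpoly_def appell_at_0)

lemma bernpoly_at_1:
  assumes "k \<noteq> 1"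
  shows "bernpoly k 1 = bernoulli k"
proof (cases k)
  case (Suc n)
  with assms have "n \<ge> 1" by simp
  then show ?thesis
    using bernoulli_recurrence[of n] Suc by (simp add: bernpoly_def appell_def)
qed simp

lemma has_real_derivative_bernpoly:
  "(bernpoly k has_real_derivative real k * bernpoly (k - 1) x) (at x)"
  unfolding bernpoly_def by (rule has_real_derivative_appell)

lemma has_real_derivative_bernpoly_comp [derivative_intros]:
  "(g has_real_derivative g') (at x within s) \<Longrightarrow>
    ((\<lambda>x. bernpoly k (g x)) has_real_derivative real k * bernpoly (k - 1) (g x) * g') (at x within s)"
  by (rule DERIV_chain2[OF has_real_derivative_bernpoly])

lemma real_polynomial_function_bernpoly:
  assumes "real_polynomial_function g"
  shows "real_polynomial_function (\<lambda>x. bernpoly k (g x))"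
  unfolding bernpoly_def appell_def
  by (intro real_polynomial_function_sum real_polynomial_function_power
      real_polynomial_function.intros assms finite_atMost)

lemma bernpoly_add_1: "bernpoly k (x + 1) = bernpoly k x + real k * x ^ (k - 1)"
proof (induction k arbitrary: x)
  case (Suc k)
  have "((\<lambda>x. bernpoly (Suc k) x + real (Suc k) * x ^ k)
      has_real_derivative real (Suc k) * (bernpoly k x + real k * x ^ (k - 1))) (at x)" for x
    by (auto intro!: derivative_eq_intros simp: algebra_simps)
  then have "((\<lambda>x. bernpoly (Suc k) (x + 1)) has_real_derivative real (Suc k) * bernpoly k (x + 1)) (at x)"
    and "((\<lambda>x. bernpoly (Suc k) x + real (Suc k) * x ^ k)
      has_real_derivative real (Suc k) * bernpoly k (x + 1)) (at x)" for x
    by (auto intro!: derivative_eq_intros simp: Suc.IH)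
  then show ?case
    unfolding diff_Suc_1
    by (rule has_real_derivative_eq_imp_eq[where a = 0])
       (cases k, simp_all add: bernpoly_at_1 bernpoly_def[of "Suc 0"] appell_def)
qed simp

lemma bernpoly_add: "bernpoly k (x + y) = appell (\<lambda>i. bernpoly i x) k y"
proof (induction k arbitrary: y)
  case (Suc k)
  have "((\<lambda>y. bernpoly (Suc k) (x + y)) has_real_derivative real (Suc k) * bernpoly k (x + y)) (at y)"
    and "(appell (\<lambda>i. bernpoly i x) (Suc k) has_real_derivative real (Suc k) * bernpoly k (x + y)) (at y)"
    for y
    using has_real_derivative_appell[of _ "Suc k"] by (auto intro!: derivative_eq_intros simp: Suc.IH)
  then show ?case
    by (rule has_real_derivative_eq_imp_eq[where a = 0]) (simp add: appell_at_0)
qed simp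

lemma has_integral_bernpoly_shift: "((\<lambda>x. bernpoly k (x + c)) has_integral c ^ k) {0..1}"
proof -
  have "((\<lambda>x. bernpoly k (x + c)) has_integral
      bernpoly (Suc k) (1 + c) / real (Suc k) - bernpoly (Suc k) (0 + c) / real (Suc k)) {0..1}"
    by (rule has_integral_real_derivative) (auto intro!: derivative_eq_intros)
  then show ?thesis
    using bernpoly_add_1[of "Suc k" c] by (simp add: add.commute diff_divide_distrib[symmetric])
qed

lemma has_integral_bernpoly:
  assumes "k \<ge> 1"
  shows "(bernpoly k has_integral 0) {0..1}"
  using has_integral_bernpoly_shift[of k 0] assms by (simp add: power_0_left)

lemma bernpoly_unique:
  assumes "k \<ge> 1"
    and deriv: "\<And>x. (f has_real_derivative real k * bernpoly (k - 1) x) (at x)"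
    and integral: "(f has_integral 0) {0..1}"
  shows "f x = bernpoly k x"
proof -
  define d where "d = f 0 - bernpoly k 0"
  have "((\<lambda>x. f x - bernpoly k x) has_real_derivative 0) (at x)" for x
    using DERIV_diff[OF deriv has_real_derivative_bernpoly[of k]] by simp
  then have const: "f x - bernpoly k x = d" for x
    unfolding d_def using DERIV_isconst_all[of "\<lambda>x. f x - bernpoly k x"] by blast
  have "((\<lambda>x. f x - bernpoly k x) has_integral 0 - 0) {0..1}"
    using integral has_integral_bernpoly[OF assms(1)] by (rule has_integral_diff)
  moreover have "((\<lambda>x. f x - bernpoly k x) has_integral d) {0..1}"
    using has_integral_const_real[of d 0 1] const by simp
  ultimately have "0 - 0 = d"
    by (rule has_integral_unique)
  then show ?thesis
    using const[of x] by simp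
qed

lemma bernpoly_reflect: "bernpoly k (1 - x) = (-1) ^ k * bernpoly k x"
proof (induction k arbitrary: x)
  case (Suc k)
  let ?f = "\<lambda>x. (-1) ^ Suc k * bernpoly (Suc k) (1 - x)"
  let ?F = "\<lambda>x. (-1) ^ k * bernpoly (Suc (Suc k)) (1 - x) / real (Suc (Suc k))"
  have deriv: "(?f has_real_derivative real (Suc k) * bernpoly (Suc k - 1) x) (at x)" for x
    by (auto intro!: derivative_eq_intros simp: Suc.IH)
  have "(?f has_integral ?F 1 - ?F 0) {0..1}"
    by (rule has_integral_real_derivative) (auto intro!: derivative_eq_intros)
  then have integral: "(?f has_integral 0) {0..1}"
    by (simp add: bernpoly_at_1)
  have "?f x = bernpoly (Suc k) x"
    using bernpoly_unique[OF _ deriv integral] by simp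
  moreover have "(-1::real) ^ Suc k * (-1) ^ Suc k = 1"
    by (simp flip: power_add)
  ultimately show ?case
    by (metis mult.assoc mult_1)
qed simp

lemma bernoulli_odd_eq_0:
  assumes "odd k" "k \<noteq> 1"
  shows "bernoulli k = 0"
  using bernpoly_reflect[of k 0] assms by (simp add: bernpoly_at_1)

lemma bernpoly_duplication:
  "2 ^ k * (bernpoly k (x / 2) + bernpoly k ((x + 1) / 2)) = 2 * bernpoly k x"
proof (induction k arbitrary: x)
  case (Suc k)
  let ?f = "\<lambda>x. 2 ^ k * (bernpoly (Suc k) (x / 2) + bernpoly (Suc k) ((x + 1) / 2))"
  let ?F = "\<lambda>x. 2 ^ Suc k * (bernpoly (Suc (Suc k)) (x / 2) + bernpoly (Suc (Suc k)) ((x + 1) / 2))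
    / real (Suc (Suc k))"
  have "(?f has_real_derivative
      real (Suc k) * (2 ^ k * (bernpoly k (x / 2) + bernpoly k ((x + 1) / 2))) / 2) (at x)" for x
    by (auto intro!: derivative_eq_intros simp: field_simps)
  then have deriv: "(?f has_real_derivative real (Suc k) * bernpoly (Suc k - 1) x) (at x)" for x
    unfolding Suc.IH by simp
  have "(?f has_integral ?F 1 - ?F 0) {0..1}"
    by (rule has_integral_real_derivative)
       (auto intro!: derivative_eq_intros simp del: of_nat_Suc simp: field_simps)
  then have integral: "(?f has_integral 0) {0..1}"
    by (simp add: bernpoly_at_1 algebra_simps)
  have "?f x = bernpoly (Suc k) x"
    using bernpoly_unique[OF _ deriv integral] by simp
  then show ?case by simp
qed simp

lemma bernpoly_half: "bernpoly k (1/2) = (2 / 2 ^ k - 1) * bernoulli k"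
proof -
  have "2 ^ k * (bernoulli k + bernpoly k (1/2)) = 2 * bernoulli k"
    using bernpoly_duplication[of k 0] by simp
  then have "bernoulli k + bernpoly k (1/2) = 2 / 2 ^ k * bernoulli k"
    by (simp add: nonzero_eq_divide_eq mult.commute)
  then show ?thesis
    by (simp add: algebra_simps)
qed

lemma bernoulli_bar_eq_bernpoly_half: "bernoulli_bar k = bernpoly k (1/2)"
proof -
  have "(1 - a / 2) / (a / 2) = 2 / a - 1" if "a \<noteq> 0" for a :: real
    using that by (simp add: field_simps)
  then show ?thesis
    by (simp add: bernoulli_bar_def bernpoly_half)
qed

section \<open>Forward differences\<close>

lemma harm_0 [simp]: "harm 0 = 0"
  by (simp add: harm_def)

lemma harm_Suc: "harm (Suc n) = harm n + 1 / real (Suc n)"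
  by (simp add: harm_def)

lemma binomial_div_Suc:
  assumes "i \<ge> 1"
  shows "real (Suc M choose i) / real i
    = real (M choose i) / real i + real (Suc M choose i) / real (Suc M)"
proof -
  obtain j where i: "i = Suc j"
    using assms by (cases i) auto
  have "real (Suc M) * real (M choose j) = real (Suc M choose Suc j) * real (Suc j)"
    using Suc_times_binomial_eq[of M j] by (metis of_nat_mult)
  then have "real (M choose j) / real (Suc j) = real (Suc M choose Suc j) / real (Suc M)"
    by (simp add: field_simps)
  then show ?thesis
    unfolding i by (simp add: add_divide_distrib)
qed

lemma sum_binomial_div_Suc:
  "(\<Sum>i=1..Suc M. real (Suc M choose i) / real i * a i * z ^ (Suc M - i))
   = z * (\<Sum>i=1..M. real (M choose i) / real i * a i * z ^ (M - i))
     + (appell a (Suc M) z - a 0 * z ^ Suc M) / real (Suc M)"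
proof -
  have "real (Suc M choose i) / real i * a i * z ^ (Suc M - i)
      = real (M choose i) / real i * a i * z ^ (Suc M - i)
        + real (Suc M choose i) * a i * z ^ (Suc M - i) / real (Suc M)" if "i \<in> {1..Suc M}" for i
  proof -
    have "real (Suc M choose i) / real i * (a i * z ^ (Suc M - i))
        = (real (M choose i) / real i + real (Suc M choose i) / real (Suc M)) * (a i * z ^ (Suc M - i))"
      using that by (subst binomial_div_Suc) auto
    then show ?thesis
      by (simp add: algebra_simps)
  qed
  then have "(\<Sum>i=1..Suc M. real (Suc M choose i) / real i * a i * z ^ (Suc M - i))
      = (\<Sum>i=1..Suc M. real (M choose i) / real i * a i * z ^ (Suc M - i)
          + real (Suc M choose i) * a i * z ^ (Suc M - i) / real (Suc M))"
    by (rule sum.cong[OF refl])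
  also have "\<dots> = (\<Sum>i=1..Suc M. real (M choose i) / real i * a i * z ^ (Suc M - i))
        + (\<Sum>i=1..Suc M. real (Suc M choose i) * a i * z ^ (Suc M - i)) / real (Suc M)"
    by (simp only: sum.distrib sum_divide_distrib)
  also have "(\<Sum>i=1..Suc M. real (M choose i) / real i * a i * z ^ (Suc M - i))
      = (\<Sum>i=1..M. real (M choose i) / real i * a i * z ^ (Suc M - i))"
    by (simp add: binomial_eq_0)
  also have "\<dots> = (\<Sum>i=1..M. z * (real (M choose i) / real i * a i * z ^ (M - i)))"
    by (intro sum.cong) (auto simp: Suc_diff_le)
  also have "(\<Sum>i=1..Suc M. real (Suc M choose i) * a i * z ^ (Suc M - i))
      = appell a (Suc M) z - a 0 * z ^ Suc M"
    unfolding appell_def by (simp add: atMost_atLeast0 sum.atLeast_Suc_atMost)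
  finally show ?thesis
    by (simp add: sum_distrib_left)
qed

lemma sum_bernpoly_div_expansion:
  "(\<Sum>m=1..M. x ^ (M - m) * bernpoly m (x + c) / real m)
   = harm M * x ^ M + (\<Sum>i=1..M. real (M choose i) / real i * bernpoly i c * x ^ (M - i))"
proof (induction M)
  case (Suc M)
  let ?Q = "\<lambda>M. \<Sum>i=1..M. real (M choose i) / real i * bernpoly i c * x ^ (M - i)"
  have "(\<Sum>m=1..M. x ^ (Suc M - m) * bernpoly m (x + c) / real m)
      = (\<Sum>m=1..M. x * (x ^ (M - m) * bernpoly m (x + c) / real m))"
    by (intro sum.cong) (auto simp: Suc_diff_le)
  then have "(\<Sum>m=1..Suc M. x ^ (Suc M - m) * bernpoly m (x + c) / real m)
      = x * (\<Sum>m=1..M. x ^ (M - m) * bernpoly m (x + c) / real m)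
        + bernpoly (Suc M) (x + c) / real (Suc M)"
    by (simp add: sum_distrib_left)
  also have "\<dots> = x * (harm M * x ^ M + ?Q M) + bernpoly (Suc M) (x + c) / real (Suc M)"
    by (simp only: Suc.IH)
  also have "\<dots> = harm (Suc M) * x ^ Suc M
      + (x * ?Q M + (bernpoly (Suc M) (x + c) - x ^ Suc M) / real (Suc M))"
  proof -
    \<comment> \<open>Stated for variables in place of the sums, which \<open>field_simps\<close> would otherwise rewrite.\<close>
    have "x * (h * x ^ M + q) + b / n = (h + 1 / n) * (x * x ^ M) + (x * q + (b - x * x ^ M) / n)"
      if "n \<noteq> 0" for h q b n :: real
      using that by (simp add: field_simps)
    then show ?thesis
      unfolding harm_Suc power_Suc by simp
  qed
  also have "x * ?Q M + (bernpoly (Suc M) (x + c) - x ^ Suc M) / real (Suc M) = ?Q (Suc M)"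
    using sum_binomial_div_Suc[of M "\<lambda>i. bernpoly i c" x] bernpoly_add[of "Suc M" c x]
    by (simp add: add.commute)
  finally show ?case .
qed simp

definition bernpoly_product_sum :: "nat \<Rightarrow> real \<Rightarrow> real \<Rightarrow> real" where
  "bernpoly_product_sum N c x
    = (\<Sum>k=1..N-1. bernpoly k x * bernpoly (N - k) (x + c) / (real k * real (N - k)))"

definition harm_bernpoly_conv :: "nat \<Rightarrow> real \<Rightarrow> real \<Rightarrow> real" where
  "harm_bernpoly_conv N c x
    = (harm (N - 1) * bernpoly N x
       + (\<Sum>i=1..N-1. real (N choose i) / real i * bernpoly i c * bernpoly (N - i) x)) / real N"

lemma harm_bernpoly_conv_add_1:
  assumes "N \<ge> 1"
  shows "harm_bernpoly_conv N c (x + 1) - harm_bernpoly_conv N c x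
    = (\<Sum>m=1..N-1. x ^ (N - 1 - m) * bernpoly m (x + c) / real m)"
proof -
  obtain M where N: "N = Suc M"
    using assms by (cases N) auto
  have summand: "real (N choose i) / real i * bernpoly i c * (bernpoly (N - i) (x + 1) - bernpoly (N - i) x)
      = real N * (real (M choose i) / real i * bernpoly i c * x ^ (M - i))" if "i \<le> M" for i
  proof -
    have absorb: "real (N - i) * real (N choose i) = real N * real (M choose i)"
      using binomial_absorb_comp[of N i] N by (metis diff_Suc_1 of_nat_mult)
    have "bernpoly (N - i) (x + 1) - bernpoly (N - i) x = real (N - i) * x ^ (M - i)"
      using bernpoly_add_1[of "N - i" x] N that by simp
    then have "real (N choose i) / real i * bernpoly i c * (bernpoly (N - i) (x + 1) - bernpoly (N - i) x)
        = (real (N - i) * real (N choose i)) / real i * bernpoly i c * x ^ (M - i)"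
      by simp
    then show ?thesis
      unfolding absorb by simp
  qed
  have "harm_bernpoly_conv N c (x + 1) - harm_bernpoly_conv N c x
      = (harm M * (bernpoly N (x + 1) - bernpoly N x)
         + (\<Sum>i=1..M. real (N choose i) / real i * bernpoly i c
              * (bernpoly (N - i) (x + 1) - bernpoly (N - i) x))) / real N"
    unfolding harm_bernpoly_conv_def N
    by (simp add: diff_divide_distrib algebra_simps sum_subtractf)
  also have "\<dots> = (harm M * (real N * x ^ M)
      + real N * (\<Sum>i=1..M. real (M choose i) / real i * bernpoly i c * x ^ (M - i))) / real N"
  proof -
    have "(\<Sum>i=1..M. real (N choose i) / real i * bernpoly i c
            * (bernpoly (N - i) (x + 1) - bernpoly (N - i) x))
        = (\<Sum>i=1..M. real N * (real (M choose i) / real i * bernpoly i c * x ^ (M - i)))"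
      by (intro sum.cong refl summand) auto
    then show ?thesis
      using bernpoly_add_1[of N x] N by (simp add: sum_distrib_left)
  qed
  also have "\<dots> = harm M * x ^ M + (\<Sum>i=1..M. real (M choose i) / real i * bernpoly i c * x ^ (M - i))"
    using N by (simp add: field_simps)
  also have "\<dots> = (\<Sum>m=1..N-1. x ^ (N - 1 - m) * bernpoly m (x + c) / real m)"
    using sum_bernpoly_div_expansion[where M = M and x = x and c = c] N by simp
  finally show ?thesis .
qed

lemma bernpoly_product_sum_add_1:
  "bernpoly_product_sum N c (x + 1) - bernpoly_product_sum N c x
    = (\<Sum>m=1..N-1. x ^ (N - 1 - m) * bernpoly m (x + c) / real m)
      + (\<Sum>k=1..N-1. (x + c) ^ (N - 1 - k) * bernpoly k x / real k)
      + (\<Sum>k=1..N-1. x ^ (k - 1) * (x + c) ^ (N - 1 - k))"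
proof -
  have "bernpoly k (x + 1) * bernpoly (N - k) (x + 1 + c) / (real k * real (N - k))
      - bernpoly k x * bernpoly (N - k) (x + c) / (real k * real (N - k))
      = x ^ (k - 1) * bernpoly (N - k) (x + c) / real (N - k)
        + (x + c) ^ (N - 1 - k) * bernpoly k x / real k + x ^ (k - 1) * (x + c) ^ (N - 1 - k)"
    if "1 \<le> k" "k \<le> N - 1" for k
  proof -
    have product_diff: "(A + k * u) * (B + m * v) / (k * m) - A * B / (k * m) = u * B / m + v * A / k + u * v"
      if "k \<noteq> 0" "m \<noteq> 0" for A B u v k m :: real
      using that by (simp add: field_simps)
    have "bernpoly (N - k) (x + 1 + c) = bernpoly (N - k) (x + c) + real (N - k) * (x + c) ^ (N - 1 - k)"
      using bernpoly_add_1[of "N - k" "x + c"] by (simp add: algebra_simps)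
    then show ?thesis
      using product_diff[of "real k" "real (N - k)"] that by (simp add: bernpoly_add_1)
  qed
  then have "bernpoly_product_sum N c (x + 1) - bernpoly_product_sum N c x
      = (\<Sum>k=1..N-1. x ^ (k - 1) * bernpoly (N - k) (x + c) / real (N - k))
        + (\<Sum>k=1..N-1. (x + c) ^ (N - 1 - k) * bernpoly k x / real k)
        + (\<Sum>k=1..N-1. x ^ (k - 1) * (x + c) ^ (N - 1 - k))"
    unfolding bernpoly_product_sum_def sum_subtractf[symmetric] sum.distrib[symmetric]
    by (intro sum.cong) auto
  moreover have "(\<Sum>k=1..N-1. x ^ (k - 1) * bernpoly (N - k) (x + c) / real (N - k))
      = (\<Sum>m=1..N-1. x ^ (N - 1 - m) * bernpoly m (x + c) / real m)"
    by (rule sum.reindex_bij_witness[where i = "\<lambda>m. N - m" and j = "\<lambda>k. N - k"]) auto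
  ultimately show ?thesis
    by simp
qed

lemma bernpoly_divided_difference_add_1:
  assumes "N \<ge> 1" "c \<noteq> 0"
  shows "(bernpoly N (x + 1 + c) - bernpoly N (x + 1)) / (real N * c)
      - (bernpoly N (x + c) - bernpoly N x) / (real N * c)
    = (\<Sum>k=1..N-1. x ^ (k - 1) * (x + c) ^ (N - 1 - k))"
proof -
  have "bernpoly N (x + 1 + c) - bernpoly N (x + 1) - (bernpoly N (x + c) - bernpoly N x)
      = real N * ((x + c) ^ (N - 1) - x ^ (N - 1))"
    using bernpoly_add_1[of N x] bernpoly_add_1[of N "x + c"] by (simp add: algebra_simps)
  then have "(bernpoly N (x + 1 + c) - bernpoly N (x + 1)) / (real N * c)
      - (bernpoly N (x + c) - bernpoly N x) / (real N * c)
      = real N * ((x + c) ^ (N - 1) - x ^ (N - 1)) / (real N * c)"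
    by (simp only: diff_divide_distrib[symmetric])
  also have "\<dots> = (\<Sum>i<N-1. x ^ (N - 1 - Suc i) * (x + c) ^ i)"
    using power_diff_sumr2[of "x + c" "N - 1" x] assms by simp
  also have "\<dots> = (\<Sum>k=1..N-1. x ^ (k - 1) * (x + c) ^ (N - 1 - k))"
    by (rule sum.reindex_bij_witness[where i = "\<lambda>k. N - 1 - k" and j = "\<lambda>i. N - 1 - i"]) auto
  finally show ?thesis .
qed

lemma bernpoly_product_sum_remainder_const:
  assumes "N \<ge> 1" "c \<noteq> 0"
  defines "R \<equiv> \<lambda>x. bernpoly_product_sum N c x - harm_bernpoly_conv N c x
    - harm_bernpoly_conv N (-c) (x + c) - (bernpoly N (x + c) - bernpoly N x) / (real N * c)"
  shows "R x = R y"
proof -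
  have id: "real_polynomial_function (\<lambda>x. x)"
    by (rule real_polynomial_function.intros(1)[OF bounded_linear_ident])
  then have shift: "real_polynomial_function (\<lambda>x. x + c)"
    by (rule real_polynomial_function.intros(3)[OF _ real_polynomial_function.intros(2)])
  have "real_polynomial_function R"
    unfolding R_def bernpoly_product_sum_def harm_bernpoly_conv_def
    by (intro real_polynomial_function_diff real_polynomial_function_divide
        real_polynomial_function_sum real_polynomial_function.intros(2-4)
        real_polynomial_function_bernpoly id shift finite_atLeastAtMost)
  moreover have "R (x + 1) = R x" for x
  proof -
    have "harm_bernpoly_conv N (-c) (x + 1 + c) - harm_bernpoly_conv N (-c) (x + c)
        = (\<Sum>k=1..N-1. (x + c) ^ (N - 1 - k) * bernpoly k x / real k)"
      using harm_bernpoly_conv_add_1[OF assms(1), of "-c" "x + c"]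
      by (simp add: add.commute add.left_commute)
    then show ?thesis
      using bernpoly_product_sum_add_1[of N c x] harm_bernpoly_conv_add_1[OF assms(1), of c x]
        bernpoly_divided_difference_add_1[OF assms(1,2), of x]
      unfolding R_def by linarith
  qed
  ultimately show ?thesis
    by (rule periodic_real_polynomial_function_const)
qed

section \<open>Integrals of products of Bernoulli polynomials\<close>

definition bernpoly_product_integral :: "nat \<Rightarrow> nat \<Rightarrow> real \<Rightarrow> real" where
  "bernpoly_product_integral k m c = (\<Sum>i=Suc k..k+m. (-1) ^ (i - Suc k)
     * (fact k * fact m / (fact i * fact (k + m - i))) * bernoulli i * c ^ (k + m - i))"

lemma bernpoly_product_integral_Suc:
  "bernpoly_product_integral k (Suc m) c
    = real (Suc m) / real (Suc k) * (bernoulli (Suc k) * c ^ m - bernpoly_product_integral (Suc k) m c)"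
proof -
  have "(-1) ^ (i - Suc k) * (fact k * fact (Suc m) / (fact i * fact (k + Suc m - i)))
      = - (real (Suc m) / real (Suc k)
          * ((-1) ^ (i - Suc (Suc k)) * (fact (Suc k) * fact m / (fact i * fact (Suc k + m - i)))))"
    if "Suc (Suc k) \<le> i" for i
  proof -
    have ratio: "s * (a * (M * b) / D) = M / K * (s * (K * a * b / D))" if "K \<noteq> 0"
      for s a b D M K :: real
      using that by (simp add: field_simps)
    have "i - Suc k = Suc (i - Suc (Suc k))" "Suc k + m - i = k + Suc m - i"
      using that by simp_all
    then show ?thesis
      using ratio[where K = "real (Suc k)" and M = "real (Suc m)" and s = "(-1) ^ (i - Suc (Suc k))"]
      by (simp del: of_nat_Suc)
  qed
  then have "(\<Sum>i=Suc (Suc k)..k + Suc m. (-1) ^ (i - Suc k)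
        * (fact k * fact (Suc m) / (fact i * fact (k + Suc m - i))) * bernoulli i * c ^ (k + Suc m - i))
      = - (real (Suc m) / real (Suc k) * bernpoly_product_integral (Suc k) m c)"
    unfolding bernpoly_product_integral_def sum_distrib_left sum_negf[symmetric]
    by (intro sum.cong) auto
  moreover have "fact k * fact (Suc m) / (fact (Suc k) * fact m) = real (Suc m) / (real (Suc k) :: real)"
    unfolding fact_Suc by (simp del: of_nat_Suc add: field_simps)
  moreover have "bernpoly_product_integral k (Suc m) c
      = fact k * fact (Suc m) / (fact (Suc k) * fact m) * bernoulli (Suc k) * c ^ m
        + (\<Sum>i=Suc (Suc k)..k + Suc m. (-1) ^ (i - Suc k)
            * (fact k * fact (Suc m) / (fact i * fact (k + Suc m - i))) * bernoulli i * c ^ (k + Suc m - i))"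
    unfolding bernpoly_product_integral_def by (subst sum.atLeast_Suc_atMost) simp_all
  ultimately show ?thesis
    by (simp add: right_diff_distrib)
qed

lemma has_integral_bernpoly_mult_shift:
  assumes "k \<ge> 1"
  shows "((\<lambda>x. bernpoly k x * bernpoly m (x + c)) has_integral bernpoly_product_integral k m c) {0..1}"
  using assms
proof (induction m arbitrary: k)
  case 0
  then show ?case
    using has_integral_bernpoly[of k] by (simp add: bernpoly_product_integral_def)
next
  case (Suc m)
  let ?F = "\<lambda>x. bernpoly (Suc k) x * bernpoly (Suc m) (x + c) / real (Suc k)"
  let ?r = "real (Suc m) / real (Suc k)"
  have antiderivative: "((\<lambda>x. bernpoly k x * bernpoly (Suc m) (x + c)
      + ?r * (bernpoly (Suc k) x * bernpoly m (x + c))) has_integral ?F 1 - ?F 0) {0..1}"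
    by (rule has_integral_real_derivative)
       (auto intro!: derivative_eq_intros simp del: of_nat_Suc simp: field_simps)
  have boundary: "?F 1 - ?F 0 = ?r * bernoulli (Suc k) * c ^ m"
  proof -
    have "bernpoly (Suc m) (1 + c) = bernpoly (Suc m) c + real (Suc m) * c ^ m"
      using bernpoly_add_1[of "Suc m" c] by (simp add: add.commute)
    moreover have "bernpoly (Suc k) 1 = bernoulli (Suc k)"
      using Suc.prems by (simp add: bernpoly_at_1)
    moreover have "b * (p + M * q) / K - b * p / K = M / K * b * q" for b p q M K :: real
      by (simp add: diff_divide_distrib[symmetric] algebra_simps)
    ultimately show ?thesis
      by (simp del: of_nat_Suc)
  qed
  have "((\<lambda>x. ?r * (bernpoly (Suc k) x * bernpoly m (x + c)))
      has_integral ?r * bernpoly_product_integral (Suc k) m c) {0..1}"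
    by (intro has_integral_mult_right Suc.IH) simp
  from has_integral_diff[OF antiderivative this]
  have "((\<lambda>x. bernpoly k x * bernpoly (Suc m) (x + c)) has_integral
      ?r * bernoulli (Suc k) * c ^ m - ?r * bernpoly_product_integral (Suc k) m c) {0..1}"
    unfolding boundary by simp
  then show ?case
    by (simp add: bernpoly_product_integral_Suc right_diff_distrib mult.assoc)
qed

lemma alternating_sum_fact_mult_fact:
  assumes "j < N"
  shows "real N * (\<Sum>k=1..j. (-1) ^ (j - k) * (fact (k - 1) * fact (N - k - 1)))
    = (-1) ^ Suc j * fact (N - 1) + fact j * fact (N - j - 1)"
  using assms
proof (induction j)
  case (Suc j)
  obtain r where "N = Suc (Suc j + r)"
    using less_imp_Suc_add[OF Suc.prems] by blast
  then have r: "N = Suc (Suc (j + r))"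
    by simp
  have telescope: "real N * (fact j * fact r) = fact j * fact (Suc r) + fact (Suc j) * fact r"
    using r by (simp add: algebra_simps)
  have "N - j - 1 = Suc r"
    using r by simp
  then have IH: "real N * (\<Sum>k=1..j. (-1) ^ (j - k) * (fact (k - 1) * fact (N - k - 1)))
      = (-1) ^ Suc j * fact (N - 1) + fact j * fact (Suc r)"
    using Suc.IH Suc.prems by simp
  have "(\<Sum>k=1..j. (-1) ^ (Suc j - k) * (fact (k - 1) * fact (N - k - 1)))
      = (\<Sum>k=1..j. - ((-1) ^ (j - k) * (fact (k - 1) * fact (N - k - 1) :: real)))"
    by (intro sum.cong) (auto simp: Suc_diff_le)
  then have "real N * (\<Sum>k=1..Suc j. (-1) ^ (Suc j - k) * (fact (k - 1) * fact (N - k - 1)))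
      = real N * (- (\<Sum>k=1..j. (-1) ^ (j - k) * (fact (k - 1) * fact (N - k - 1))) + fact j * fact r)"
    using r by (simp add: sum_negf)
  also have "\<dots> = - (real N * (\<Sum>k=1..j. (-1) ^ (j - k) * (fact (k - 1) * fact (N - k - 1))))
      + real N * (fact j * fact r)"
    by (simp only: distrib_left mult_minus_right)
  also have "\<dots> = - ((-1) ^ Suc j * fact (N - 1) + fact j * fact (Suc r))
      + (fact j * fact (Suc r) + fact (Suc j) * fact r)"
    by (simp only: IH telescope)
  also have "\<dots> = (-1) ^ Suc (Suc j) * fact (N - 1) + fact (Suc j) * fact (N - Suc j - 1)"
    using r by simp
  finally show ?case .
qed simp

lemma bernpoly_product_integral_div:
  assumes "1 \<le> k" "k < N"
  shows "bernpoly_product_integral k (N - k) c / (real k * real (N - k))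
    = (\<Sum>i=Suc k..N. (-1) ^ (i - Suc k) * (fact (k - 1) * fact (N - k - 1)) / (fact i * fact (N - i))
        * bernoulli i * c ^ (N - i))"
proof -
  have facts: "fact k * fact (N - k) / (real k * real (N - k)) = (fact (k - 1) * fact (N - k - 1) :: real)"
    using assms by (simp add: fact_reduce[of k] fact_reduce[of "N - k"])
  have regroup: "s * (a / D) * b * x / q = s * (a / q) / D * b * x" for s a D b x q :: real
    by (simp add: divide_inverse ac_simps)
  have "k + (N - k) = N"
    using assms by simp
  then show ?thesis
    unfolding bernpoly_product_integral_def sum_divide_distrib
    by (simp only: regroup facts)
qed

lemma sum_bernpoly_product_coeff:
  assumes "1 \<le> i" "i \<le> N"
  shows "(\<Sum>k=1..i-1. (-1) ^ (i - Suc k) * (fact (k - 1) * fact (N - k - 1)) / (fact i * fact (N - i))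
        * bernoulli i * c ^ (N - i))
    = (-1) ^ i * real (N choose i) * bernoulli i * c ^ (N - i) / real N ^ 2
      + bernoulli i * c ^ (N - i) / real i / real N"
proof -
  obtain j where i: "i = Suc j"
    using assms by (cases i) auto
  let ?b = "bernoulli i * c ^ (N - i)"
  have "(\<Sum>k=1..i-1. (-1) ^ (i - Suc k) * (fact (k - 1) * fact (N - k - 1)) / (fact i * fact (N - i)) * ?b)
      = (\<Sum>k=1..j. (-1) ^ (j - k) * (fact (k - 1) * fact (N - k - 1))) * (?b / (fact i * fact (N - i)))"
    unfolding i sum_distrib_right by (intro sum.cong) auto
  also have "\<dots> = ((-1) ^ i * fact (N - 1) + fact j * fact (N - i)) / real N * (?b / (fact i * fact (N - i)))"
  proof -
    have "real N * (\<Sum>k=1..j. (-1) ^ (j - k) * (fact (k - 1) * fact (N - k - 1)))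
        = (-1) ^ i * fact (N - 1) + fact j * fact (N - i)"
      using alternating_sum_fact_mult_fact[of j N] assms i by simp
    then show ?thesis
      using assms by (simp add: eq_divide_eq mult.commute)
  qed
  also have "\<dots> = (-1) ^ i * real (N choose i) * ?b / real N ^ 2 + ?b / real i / real N"
  proof -
    have regroup: "((s * F + A * Q) / n) * (b / (m * A * Q)) = s * (n * F / (m * A * Q)) * b / n ^ 2 + b / m / n"
      if "n \<noteq> 0" "m \<noteq> 0" "A \<noteq> 0" "Q \<noteq> 0" for s F A Q n m b :: real
      using that by (simp add: field_simps power2_eq_square)
    have "fact i = real i * (fact j :: real)"
      unfolding i fact_Suc by simp
    moreover have "real (N choose i) = real N * fact (N - 1) / (real i * fact j * fact (N - i))"
      using assms i by (simp add: binomial_fact fact_reduce[of N])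
    ultimately show ?thesis
      by (simp only:) (rule regroup, use assms in auto)
  qed
  finally show ?thesis
    by (simp add: mult.assoc)
qed

lemma sum_alternating_binomial_bernoulli:
  "(\<Sum>i=1..N. (-1) ^ i * real (N choose i) * bernoulli i * x ^ (N - i)) = bernpoly N (1 + x) - x ^ N"
proof -
  have "(-1) ^ N * (real (N choose i) * bernoulli i * (-x) ^ (N - i))
      = (-1) ^ i * real (N choose i) * bernoulli i * x ^ (N - i)" if "i \<le> N" for i
  proof -
    have exponent: "N + (N - i) = i + 2 * (N - i)"
      using that by simp
    have "(-1::real) ^ N * (-1) ^ (N - i) = (-1) ^ (N + (N - i))"
      by (rule power_add[symmetric])
    also have "\<dots> = (-1) ^ i"
      unfolding exponent by (simp add: power_add power_mult)
    finally have "(-1::real) ^ N * (-1) ^ (N - i) = (-1) ^ i" .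
    then show ?thesis
      by (simp add: power_minus[of x] mult_ac)
  qed
  then have "(-1) ^ N * bernpoly N (-x)
      = (\<Sum>i\<le>N. (-1) ^ i * real (N choose i) * bernoulli i * x ^ (N - i))"
    unfolding bernpoly_def appell_def sum_distrib_left by (intro sum.cong) auto
  moreover have "bernpoly N (1 + x) = (-1) ^ N * bernpoly N (-x)"
    using bernpoly_reflect[of N "-x"] by simp
  ultimately show ?thesis
    by (simp add: atMost_atLeast0 sum.atLeast_Suc_atMost)
qed

lemma has_integral_bernpoly_product_sum:
  assumes "N \<ge> 1"
  shows "(bernpoly_product_sum N c has_integral
      (bernpoly N (1 + c) - c ^ N) / real N ^ 2 + (\<Sum>i=1..N. bernoulli i * c ^ (N - i) / real i) / real N)
      {0..1}"
proof -
  let ?G = "\<lambda>k i. (-1) ^ (i - Suc k) * (fact (k - 1) * fact (N - k - 1)) / (fact i * fact (N - i))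
    * bernoulli i * c ^ (N - i)"
  have "(bernpoly_product_sum N c has_integral
      (\<Sum>k=1..N-1. bernpoly_product_integral k (N - k) c / (real k * real (N - k)))) {0..1}"
    unfolding bernpoly_product_sum_def[abs_def]
    by (intro has_integral_sum has_integral_divide has_integral_bernpoly_mult_shift) auto
  also have "(\<Sum>k=1..N-1. bernpoly_product_integral k (N - k) c / (real k * real (N - k)))
      = (\<Sum>k=1..N. \<Sum>i=Suc k..N. ?G k i)"
  proof -
    have "(\<Sum>k=1..N-1. bernpoly_product_integral k (N - k) c / (real k * real (N - k)))
        = (\<Sum>k=1..N-1. \<Sum>i=Suc k..N. ?G k i)"
      by (intro sum.cong refl bernpoly_product_integral_div) auto
    also have "\<dots> = (\<Sum>k=1..N. \<Sum>i=Suc k..N. ?G k i)"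
      using assms by (cases N) simp_all
    finally show ?thesis .
  qed
  also have "\<dots> = (\<Sum>i=1..N. \<Sum>k=1..i-1. ?G k i)"
    by (rule sum_triangle_swap)
  also have "\<dots> = (\<Sum>i=1..N. (-1) ^ i * real (N choose i) * bernoulli i * c ^ (N - i) / real N ^ 2
      + bernoulli i * c ^ (N - i) / real i / real N)"
    by (intro sum.cong refl sum_bernpoly_product_coeff) auto
  also have "\<dots> = (\<Sum>i=1..N. (-1) ^ i * real (N choose i) * bernoulli i * c ^ (N - i)) / real N ^ 2
      + (\<Sum>i=1..N. bernoulli i * c ^ (N - i) / real i) / real N"
    by (simp only: sum.distrib sum_divide_distrib)
  also have "\<dots> = (bernpoly N (1 + c) - c ^ N) / real N ^ 2
      + (\<Sum>i=1..N. bernoulli i * c ^ (N - i) / real i) / real N"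
    by (simp only: sum_alternating_binomial_bernoulli)
  finally show ?thesis .
qed

section \<open>A product formula for Bernoulli polynomials\<close>

lemma has_integral_harm_bernpoly_conv_shift:
  assumes "N \<ge> 1"
  shows "((\<lambda>x. harm_bernpoly_conv N d (x + e)) has_integral
    (harm (N - 1) * e ^ N + (\<Sum>i=1..N-1. real (N choose i) / real i * bernpoly i d * e ^ (N - i)))
      / real N) {0..1}"
  unfolding harm_bernpoly_conv_def
  by (intro has_integral_divide has_integral_add has_integral_mult_right has_integral_sum
      has_integral_bernpoly_shift) auto

lemma has_integral_harm_bernpoly_conv:
  assumes "N \<ge> 1"
  shows "(harm_bernpoly_conv N d has_integral 0) {0..1}"
proof -
  have "(\<Sum>i=1..N-1. real (N choose i) / real i * bernpoly i d * 0 ^ (N - i)) = (0::real)"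
    by (intro sum.neutral) auto
  then show ?thesis
    using has_integral_harm_bernpoly_conv_shift[OF assms, of d 0] assms by (simp add: power_0_left)
qed

lemma has_integral_harm_bernpoly_conv_uminus_shift:
  assumes "N \<ge> 1"
  shows "((\<lambda>x. harm_bernpoly_conv N (-c) (x + c)) has_integral
    (\<Sum>i=1..N. bernoulli i * c ^ (N - i) / real i) / real N - (c ^ N + bernpoly N (-c)) / real N ^ 2)
    {0..1}"
proof -
  let ?F = "\<Sum>i=1..N-1. real (N choose i) / real i * bernpoly i (-c) * c ^ (N - i)"
  have "(\<Sum>i=1..N. bernoulli i * c ^ (N - i) / real i)
      = harm N * c ^ N + (\<Sum>i=1..N. real (N choose i) / real i * bernpoly i (-c) * c ^ (N - i))"
    using sum_bernpoly_div_expansion[where M = N and x = c and c = "-c"] by (simp add: mult.commute)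
  also have "(\<Sum>i=1..N. real (N choose i) / real i * bernpoly i (-c) * c ^ (N - i))
      = ?F + bernpoly N (-c) / real N"
    using assms by (cases N) simp_all
  also have "harm N = harm (N - 1) + 1 / real N"
    using assms harm_Suc[of "N - 1"] by simp
  finally have "harm (N - 1) * c ^ N + ?F
      = (\<Sum>i=1..N. bernoulli i * c ^ (N - i) / real i) - c ^ N / real N - bernpoly N (-c) / real N"
    by (simp add: algebra_simps)
  moreover have "(h + f) / n = e / n - (q + b) / n ^ 2" if "h + f = e - q / n - b / n" "n \<noteq> 0"
    for h f e q b n :: real
    using that by (simp add: field_simps power2_eq_square)
  ultimately have "(harm (N - 1) * c ^ N + ?F) / real N
      = (\<Sum>i=1..N. bernoulli i * c ^ (N - i) / real i) / real N - (c ^ N + bernpoly N (-c)) / real N ^ 2"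
    using assms by simp
  then show ?thesis
    using has_integral_harm_bernpoly_conv_shift[OF assms, of "-c" c] by simp
qed

lemma has_integral_bernpoly_product_sum_remainder:
  assumes "N \<ge> 1" "c \<noteq> 0"
  shows "((\<lambda>x. bernpoly_product_sum N c x - harm_bernpoly_conv N c x - harm_bernpoly_conv N (-c) (x + c)
      - (bernpoly N (x + c) - bernpoly N x) / (real N * c))
    has_integral (bernpoly N c + bernpoly N (-c)) / real N ^ 2) {0..1}"
proof -
  let ?E = "\<Sum>i=1..N. bernoulli i * c ^ (N - i) / real i"
  have "((\<lambda>x. bernpoly_product_sum N c x - harm_bernpoly_conv N c x - harm_bernpoly_conv N (-c) (x + c)
      - (bernpoly N (x + c) - bernpoly N x) / (real N * c))
    has_integral ((bernpoly N (1 + c) - c ^ N) / real N ^ 2 + ?E / real N) - 0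
      - (?E / real N - (c ^ N + bernpoly N (-c)) / real N ^ 2) - (c ^ N - 0) / (real N * c)) {0..1}"
    by (intro has_integral_diff has_integral_divide has_integral_bernpoly_product_sum
        has_integral_harm_bernpoly_conv has_integral_harm_bernpoly_conv_uminus_shift
        has_integral_bernpoly_shift has_integral_bernpoly assms(1))
  moreover have "bernpoly N (1 + c) = bernpoly N c + real N * c ^ (N - 1)"
    using bernpoly_add_1[of N c] by (simp add: add.commute)
  moreover have "c ^ N = c * c ^ (N - 1)"
    using assms(1) by (cases N) simp_all
  moreover have "(p + n * q - d * q) / n ^ 2 + e / n - 0 - (e / n - (d * q + m) / n ^ 2) - (d * q - 0) / (n * d)
      = (p + m) / n ^ 2" if "n \<noteq> 0" "d \<noteq> 0" for p q d e m n :: real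
    using that by (simp add: field_simps power2_eq_square)
  ultimately show ?thesis
    using assms by simp
qed

lemma bernpoly_product_sum_eq:
  assumes "N \<ge> 1" "c \<noteq> 0"
  shows "bernpoly_product_sum N c x
    = harm_bernpoly_conv N c x + harm_bernpoly_conv N (-c) (x + c)
      + (bernpoly N (x + c) - bernpoly N x) / (real N * c)
      + (bernpoly N c + bernpoly N (-c)) / real N ^ 2"
proof -
  define R where "R x = bernpoly_product_sum N c x - harm_bernpoly_conv N c x
    - harm_bernpoly_conv N (-c) (x + c) - (bernpoly N (x + c) - bernpoly N x) / (real N * c)" for x
  have "R = (\<lambda>_. R x)"
    using bernpoly_product_sum_remainder_const[OF assms, of _ x, folded R_def] by auto
  moreover have "((\<lambda>_::real. R x) has_integral R x) {0..1}"
    using has_integral_const_real[of "R x" 0 1] by simp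
  ultimately have "(R has_integral R x) {0..1}"
    by (simp only:)
  moreover have "(R has_integral (bernpoly N c + bernpoly N (-c)) / real N ^ 2) {0..1}"
    unfolding R_def[abs_def] by (rule has_integral_bernpoly_product_sum_remainder[OF assms])
  ultimately have "R x = (bernpoly N c + bernpoly N (-c)) / real N ^ 2"
    by (rule has_integral_unique)
  then show ?thesis
    unfolding R_def by simp
qed

section \<open>The case \<open>c = 1/2\<close>\<close>

lemma sum_binomial_bernpoly_eq:
  assumes "N \<ge> 1"
  shows "(\<Sum>i=1..N-1. real (N choose i) * (-c) ^ i * bernpoly (N - i) c)
    = bernoulli N - bernpoly N c - (-c) ^ N"
proof -
  have "bernoulli N = appell (\<lambda>i. bernpoly i c) N (-c)"
    using bernpoly_add[of N c "-c"] by simp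
  also have "\<dots> = (\<Sum>i\<le>N. real (N choose i) * (-c) ^ i * bernpoly (N - i) c)"
    unfolding appell_def
    by (rule sum.reindex_bij_witness[where i = "\<lambda>i. N - i" and j = "\<lambda>i. N - i"])
       (auto simp: binomial_symmetric[symmetric])
  also have "\<dots> = bernpoly N c + (\<Sum>i=1..N-1. real (N choose i) * (-c) ^ i * bernpoly (N - i) c)
      + (-c) ^ N"
  proof -
    obtain M where "N = Suc M"
      using assms by (cases N) auto
    then show ?thesis
      unfolding sum.atMost_Suc by (simp add: atMost_atLeast0 sum.atLeast_Suc_atMost)
  qed
  finally show ?thesis
    by simp
qed

lemma bernoulli_plus_bernpoly_half: "bernoulli k + bernpoly k (1/2) = 2 * bernoulli k / 2 ^ k"
  by (simp add: bernpoly_half algebra_simps)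

lemma harm_bernpoly_conv_minus_half:
  assumes "even N" "N \<ge> 2"
  shows "harm_bernpoly_conv N (-(1/2)) (1/2)
    = (harm (N - 1) * bernpoly N (1/2)
       + (\<Sum>i=1..N-1. real (N choose i) / real i * bernpoly i (1/2) * bernpoly (N - i) (1/2))
       + 2 * (bernoulli N - bernpoly N (1/2)) - (1/2) ^ (N - 1)) / real N"
proof -
  let ?h = "\<lambda>k. bernpoly k (1/2)"
  let ?T = "\<Sum>i=1..N-1. real (N choose i) * (-(1/2)) ^ (i - 1) * ?h (N - i)"
  have "bernpoly i (-(1/2)) = ?h i - real i * (-(1/2)) ^ (i - 1)" for i
    using bernpoly_add_1[of i "-(1/2)"] by simp
  moreover have "C / m * (p - m * q) * r = C / m * p * r - C * q * r" if "m \<noteq> 0" for C m p q r :: real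
    using that by (simp add: field_simps)
  ultimately have "(\<Sum>i=1..N-1. real (N choose i) / real i * bernpoly i (-(1/2)) * ?h (N - i))
      = (\<Sum>i=1..N-1. real (N choose i) / real i * ?h i * ?h (N - i)) - ?T"
    unfolding sum_subtractf[symmetric] by (intro sum.cong) auto
  moreover have "?T = - 2 * (\<Sum>i=1..N-1. real (N choose i) * (-(1/2)) ^ i * ?h (N - i))"
    unfolding sum_distrib_left by (intro sum.cong) (auto simp: power_eq_if)
  moreover have "(1/2 :: real) ^ N = (1/2) ^ (N - 1) / 2"
    using assms(2) by (cases N) simp_all
  ultimately show ?thesis
    using sum_binomial_bernpoly_eq[of N "1/2"] assms by (simp add: harm_bernpoly_conv_def)
qed

lemma bernpoly_product_sum_half:
  assumes "even N" "N \<ge> 2"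
  shows "bernpoly_product_sum N (1/2) 0
    = (harm (N - 1) * (bernoulli N + bernpoly N (1/2))
       + (\<Sum>i=1..N-1. real (N choose i) / real i * bernpoly i (1/2)
            * (bernoulli (N - i) + bernpoly (N - i) (1/2)))) / real N
      + 2 * bernpoly N (1/2) / real N ^ 2"
proof -
  let ?h = "\<lambda>k. bernpoly k (1/2)"
  let ?S1 = "\<Sum>i=1..N-1. real (N choose i) / real i * ?h i * bernoulli (N - i)"
  let ?S2 = "\<Sum>i=1..N-1. real (N choose i) / real i * ?h i * ?h (N - i)"
  have "bernpoly_product_sum N (1/2) 0 = harm_bernpoly_conv N (1/2) 0
      + harm_bernpoly_conv N (-(1/2)) (1/2) + (?h N - bernoulli N) / (real N * (1/2))
      + (?h N + bernpoly N (-(1/2))) / real N ^ 2"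
    using bernpoly_product_sum_eq[of N "1/2" 0] assms by simp
  also have "\<dots> = (harm (N - 1) * bernoulli N + ?S1) / real N
      + (harm (N - 1) * ?h N + ?S2 + 2 * (bernoulli N - ?h N) - (1/2) ^ (N - 1)) / real N
      + (?h N - bernoulli N) / (real N * (1/2)) + (?h N + (?h N + real N * (1/2) ^ (N - 1))) / real N ^ 2"
  proof -
    have "bernpoly N (-(1/2)) = ?h N + real N * (1/2) ^ (N - 1)"
      using bernpoly_add_1[of N "-(1/2)"] assms by simp
    then show ?thesis
      unfolding harm_bernpoly_conv_minus_half[OF assms] by (simp add: harm_bernpoly_conv_def)
  qed
  also have "\<dots> = (harm (N - 1) * (bernoulli N + ?h N) + (?S1 + ?S2)) / real N + 2 * ?h N / real N ^ 2"
  proof -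
    have "(H * b + S1) / n + (H * h + S2 + 2 * (b - h) - q) / n + (h - b) / (n * (1/2))
        + (h + (h + n * q)) / n ^ 2 = (H * (b + h) + (S1 + S2)) / n + 2 * h / n ^ 2"
      if "n \<noteq> 0" for H h b q n S1 S2 :: real
      using that by (simp add: field_simps power2_eq_square)
    then show ?thesis
      using assms by simp
  qed
  also have "?S1 + ?S2 = (\<Sum>i=1..N-1. real (N choose i) / real i * ?h i * (bernoulli (N - i) + ?h (N - i)))"
    unfolding sum.distrib[symmetric] by (simp add: distrib_left)
  finally show ?thesis .
qed

lemma bernpoly_half_odd_eq_0:
  assumes "odd k" "k \<noteq> 1"
  shows "bernpoly k (1/2) = 0"
  using bernoulli_odd_eq_0[OF assms] by (simp add: bernpoly_half)

lemma sum_bernoulli_bar_eq_bernpoly_product_sum: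
  assumes "n \<ge> 2"
  shows "(\<Sum>k=1..n-1. bernoulli (2*k) * bernoulli_bar (2*n - 2*k) / (real (2*k) * real (2*n - 2*k)))
    = bernpoly_product_sum (2*n) (1/2) 0"
proof -
  define f where "f i = bernoulli i * bernpoly (2*n - i) (1/2) / (real i * real (2*n - i))" for i
  have f_odd: "f (2 * k + 1) = 0" for k
    using assms bernoulli_odd_eq_0[of "2 * k + 1"] bernpoly_half_odd_eq_0[of "2 * n - 1"]
    by (cases "k = 0") (simp_all add: f_def)
  have "(\<Sum>k=1..n-1. bernoulli (2*k) * bernoulli_bar (2*n - 2*k) / (real (2*k) * real (2*n - 2*k)))
      = (\<Sum>k=1..n-1. f (2 * k))"
    by (simp add: f_def bernoulli_bar_eq_bernpoly_half)
  also have "\<dots> = (\<Sum>i=1..2*(n-1). f i)"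
    using f_odd by (rule sum_even_eq_sum)
  also have "\<dots> = (\<Sum>i=1..2*n-1. f i)"
  proof -
    have "2 * n - 1 = Suc (2 * (n - 1))"
      using assms by simp
    then show ?thesis
      using f_odd[of "n - 1"] by simp
  qed
  finally show ?thesis
    by (simp add: bernpoly_product_sum_def f_def)
qed

lemma bernoulli_product_term_eq:
  assumes "1 \<le> i" "i \<le> N"
  shows "bernoulli i * bernoulli (N - i) / real i * real (N choose i) * (1 - 2 ^ (i - 1)) / 2 ^ (N - 1)
    = real (N choose i) / real i * bernpoly i (1/2) * (bernoulli (N - i) + bernpoly (N - i) (1/2)) / 2"
proof -
  have "(2::real) ^ (N - 1) = 2 ^ (i - 1) * 2 ^ (N - i)" "(2::real) ^ i = 2 * 2 ^ (i - 1)"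
    using assms by (simp_all flip: power_add power_Suc)
  then show ?thesis
    using assms by (simp add: bernpoly_half bernoulli_plus_bernpoly_half field_simps)
qed

lemma sum_bernoulli_product_eq:
  assumes "n \<ge> 2"
  shows "(\<Sum>k=1..n. bernoulli (2*k) * bernoulli (2*n - 2*k) / real (2*k)
      * real ((2*n) choose (2*k)) * (1 - 2 powi (2*int k - 1)) / 2 ^ (2*n - 1))
    = (\<Sum>i=1..2*n-1. real ((2*n) choose i) / real i * bernpoly i (1/2)
        * (bernoulli (2*n - i) + bernpoly (2*n - i) (1/2))) / 2
      + bernpoly (2*n) (1/2) / real (2*n)"
proof -
  define g where "g i = bernoulli i * bernoulli (2*n - i) / real i * real ((2*n) choose i)
    * (1 - 2 ^ (i - 1)) / 2 ^ (2*n - 1)" for i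
  have "(2::real) powi (2 * int k - 1) = 2 ^ (2 * k - 1)" if "k \<ge> 1" for k
    using that by (simp add: power_int_def nat_diff_distrib)
  then have "(\<Sum>k=1..n. bernoulli (2*k) * bernoulli (2*n - 2*k) / real (2*k)
      * real ((2*n) choose (2*k)) * (1 - 2 powi (2*int k - 1)) / 2 ^ (2*n - 1)) = (\<Sum>k=1..n. g (2 * k))"
    by (simp add: g_def)
  also have "\<dots> = (\<Sum>i=1..2*n. g i)"
  proof (rule sum_even_eq_sum)
    fix k
    have "bernoulli (2 * n - 1) = 0"
      using assms by (intro bernoulli_odd_eq_0) auto
    then show "g (2 * k + 1) = 0"
      by (cases "k = 0") (simp_all add: g_def bernoulli_odd_eq_0)
  qed
  also have "\<dots> = (\<Sum>i=1..2*n-1. g i) + g (2 * n)"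
    using assms by (cases "2 * n") simp_all
  also have "(\<Sum>i=1..2*n-1. g i) = (\<Sum>i=1..2*n-1. real ((2*n) choose i) / real i * bernpoly i (1/2)
      * (bernoulli (2*n - i) + bernpoly (2*n - i) (1/2)) / 2)"
    unfolding g_def by (intro sum.cong refl bernoulli_product_term_eq) auto
  also have "g (2 * n) = bernpoly (2*n) (1/2) / real (2*n)"
    using assms by (simp add: g_def bernpoly_half power_diff field_simps)
  finally show ?thesis
    by (simp add: sum_divide_distrib)
qed

theorem theorem3p1:
  fixes n :: nat
  assumes "n \<ge> 2"
  shows "(\<Sum>k=1..n-1. bernoulli (2*k) * bernoulli_bar (2*n - 2*k) / (real (2*k) * real (2*n - 2*k)))
       = (1 / real n) * (\<Sum>k=1..n. bernoulli (2*k) * bernoulli (2*n - 2*k) / real (2*k)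
              * real ((2*n) choose (2*k)) * (1 - 2 powi (2*int k - 1)) / 2 ^ (2*n - 1))
         + (1 / real n) * (bernoulli (2*n) / 2 ^ (2*n)) * harm (2*n - 1)"
proof -
  have "even (2 * n)" "2 * n \<ge> 2"
    using assms by auto
  note half = bernpoly_product_sum_half[OF this]
  show ?thesis
    unfolding sum_bernoulli_bar_eq_bernpoly_product_sum[OF assms] sum_bernoulli_product_eq[OF assms]
      half bernoulli_plus_bernpoly_half
    using assms by (simp add: field_simps power2_eq_square)
qed

end
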